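(* Let $n\ge1$, $1\le m\le n$, $\sigma_1,\dots,\sigma_n>0$ and $k>0$. Let $\epsilon_0\sim\mathcal N(0,\mathrm{diag}(\sigma_1^2,\dots,\sigma_n^2))$ and $\epsilon_1\sim\mathcal N(0,\mathrm{diag}(k^2\sigma_1^2,\dots,k^2\sigma_m^2,\sigma_{m+1}^2,\dots,\sigma_n^2))$ on $\mathbb R^n$. Let $h:\mathbb R^n\to[0,1]$ be measurable and $p_A=\mathbb E[h(\epsilon_0)]\in(0,1)$. Then $$\mathbb E[h(\epsilon_1)]\ge\begin{cases}F_{\chi^2_m}\!\Big(\frac{1}{k^2}F_{\chi^2_m}^{-1}(p_A)\Big), & k\ge1,\\[4pt] 1-F_{\chi^2_m}\!\Big(\frac{1}{k^2}F_{\chi^2_m}^{-1}(1-p_A)\Big), & k<1.\end{cases}$$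
   Context: $F_{\chi^2_m}$ denotes the cumulative distribution function of the chi-square distribution with $m$ degrees of freedom, and $F_{\chi^2_m}^{-1}$ its inverse on $(0,1)$. (In the paper $h(\cdot)=P(y\mid x+\cdot)$ is the base classifier's probability of class $y$ at a noisy input, so $\mathbb E[h(\epsilon)]$ is the smoothed class probability.) *)

theory Defs
  imports "HOL-Probability.Probability"
begin

text \<open>Centered Gaussian on R^n with diagonal covariance diag(s 0^2, ..., s (n-1)^2),
  realised as the product measure on functions {..<n} \<rightarrow> real (extensional).\<close>
definition gauss_diag :: "nat \<Rightarrow> (nat \<Rightarrow> real) \<Rightarrow> (nat \<Rightarrow> real) measure" where
  "gauss_diag n s = PiM {..<n} (\<lambda>i. density lborel (normal_density 0 (s i)))"

definition chi2_density :: "nat \<Rightarrow> real \<Rightarrow> real" where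
  "chi2_density m t = (if t > 0 then t powr (real m / 2 - 1) * exp (- t / 2)
       / (2 powr (real m / 2) * Gamma (real m / 2)) else 0)"

definition chi2_cdf :: "nat \<Rightarrow> real \<Rightarrow> real" where
  "chi2_cdf m x = (LINT t:{..x}|lborel. chi2_density m t)"

definition chi2_cdf_inv :: "nat \<Rightarrow> real \<Rightarrow> real" where
  "chi2_cdf_inv m p = (THE x. 0 < x \<and> chi2_cdf m x = p)"

end

theory Submission
  imports Defs
begin

text \<open>Rescaling the first \<open>m\<close> coordinates by \<open>k\<close> multiplies the Gaussian density by the
  likelihood ratio \<open>k\<^sup>-\<^sup>m exp ((1 - 1/k\<^sup>2) \<chi> / 2)\<close>, where \<open>\<chi> = (\<Sum>i<m. (x i / \<sigma> i)\<^sup>2)\<close>.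
  It is increasing in \<open>\<chi>\<close> for \<open>k \<ge> 1\<close> and decreasing for \<open>k < 1\<close>, so by the
  Neyman--Pearson lemma the expectation of \<open>h\<close> under the rescaled Gaussian is at least the
  rescaled probability of the region \<open>{\<chi> \<le> t}\<close> (resp. \<open>{\<chi> > t}\<close>) whose original probability
  is \<open>p\<^sub>A\<close>. Under the original Gaussian \<open>\<chi>\<close> is a sum of \<open>m\<close> independent squared standard
  normals, hence \<open>\<chi>\<^sup>2\<^sub>m\<close>-distributed because Gamma densities of a common scale are closed under
  convolution; under the rescaled Gaussian the same holds for \<open>\<chi> / k\<^sup>2\<close>.\<close>

section \<open>Gamma densities with scale 2\<close>

definition gamma2_density :: "real \<Rightarrow> real \<Rightarrow> real" where
  "gamma2_density a t = (if t > 0 then t powr (a - 1) * exp (- t / 2) / (2 powr a * Gamma a) else 0)"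

lemma chi2_density_eq_gamma2_density: "chi2_density m = gamma2_density (real m / 2)"
  by (auto simp: fun_eq_iff chi2_density_def gamma2_density_def)

lemma gamma2_density_nonneg: "0 \<le> a \<Longrightarrow> 0 \<le> gamma2_density a t"
  by (cases "a = 0") (auto simp: gamma2_density_def intro!: divide_nonneg_pos)

lemma borel_measurable_gamma2_density[measurable]: "gamma2_density a \<in> borel_measurable borel"
  unfolding gamma2_density_def[abs_def] by measurable

lemma nn_integral_Beta:
  assumes "0 < a" "0 < b"
  shows "(\<integral>\<^sup>+u. ennreal (u powr (a - 1) * (1 - u) powr (b - 1) * indicator {0<..<1} u) \<partial>lborel)
    = ennreal (Beta a b)"
proof -
  have "((\<lambda>u. u powr (a - 1) * (1 - u) powr (b - 1)) has_integral Beta a b) {0<..<1}"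
    using has_integral_Beta_real[OF assms] by (simp add: has_integral_Icc_iff_Ioo)
  from nn_integral_has_integral_lebesgue[OF _ this] show ?thesis
    by (simp add: mult_ac)
qed

lemma nn_integral_Beta_rescaled:
  assumes a: "0 < a" and b: "0 < b" and x: "0 < x"
  shows "(\<integral>\<^sup>+y. ennreal ((x - y) powr (a - 1) * y powr (b - 1) * indicator {0<..<x} y) \<partial>lborel)
    = ennreal (x powr (a + b - 1) * Beta b a)"
proof -
  define c where "c = x powr (a - 1) * x powr (b - 1)"
  have c: "0 \<le> c" by (simp add: c_def)
  have B: "0 \<le> Beta b a"
    using a b by (simp add: Beta_def Gamma_real_pos less_imp_le)
  have integrand:
    "ennreal ((x - (0 + x * u)) powr (a - 1) * (0 + x * u) powr (b - 1) * indicator {0<..<x} (0 + x * u))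
      = ennreal c * ennreal (u powr (b - 1) * (1 - u) powr (a - 1) * indicator {0<..<1} u)" for u
  proof (cases "0 < u \<and> u < 1")
    case True
    have "x - x * u = x * (1 - u)" by (simp add: algebra_simps)
    then have "(x - x * u) powr (a - 1) = x powr (a - 1) * (1 - u) powr (a - 1)"
      using True x by (simp add: powr_mult)
    moreover have "(x * u) powr (b - 1) = x powr (b - 1) * u powr (b - 1)"
      using True x by (simp add: powr_mult)
    moreover have "0 < x * u \<and> x * u < x" using True x by (simp add: mult_less_cancel_left1)
    ultimately show ?thesis using True c
      by (simp add: c_def ennreal_mult'[symmetric] mult_ac)
  next
    case False
    then have "\<not> (0 < x * u \<and> x * u < x)" using x
      by (auto simp: zero_less_mult_iff mult_less_cancel_left1)
    then show ?thesis using False by auto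
  qed
  have "(\<integral>\<^sup>+y. ennreal ((x - y) powr (a - 1) * y powr (b - 1) * indicator {0<..<x} y) \<partial>lborel)
      = ennreal \<bar>x\<bar> * (\<integral>\<^sup>+u. ennreal ((x - (0 + x * u)) powr (a - 1) * (0 + x * u) powr (b - 1)
          * indicator {0<..<x} (0 + x * u)) \<partial>lborel)"
    by (rule nn_integral_real_affine) (use x in auto)
  also have "\<dots> = ennreal x * (ennreal c * ennreal (Beta b a))"
    by (simp only: integrand abs_of_pos[OF x], subst nn_integral_cmult) (auto simp: nn_integral_Beta a b)
  also have "\<dots> = ennreal (x * c * Beta b a)"
    using x c B by (simp add: ennreal_mult mult.assoc)
  also have "x * c = x powr (a + b - 1)"
    using x by (simp add: c_def mult.assoc[symmetric] powr_add[symmetric] powr_diff)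
  finally show ?thesis .
qed

lemma convolution_gamma2_density:
  assumes a: "0 < a" and b: "0 < b"
  shows "(\<integral>\<^sup>+y. ennreal (gamma2_density a (x - y)) * ennreal (gamma2_density b y) \<partial>lborel)
    = ennreal (gamma2_density (a + b) x)"
proof (cases "0 < x")
  case False
  then have "\<And>y. ennreal (gamma2_density a (x - y)) * ennreal (gamma2_density b y) = 0"
    by (auto simp: gamma2_density_def)
  moreover have "gamma2_density (a + b) x = 0"
    using False by (simp add: gamma2_density_def)
  ultimately show ?thesis by (simp only:) simp
next
  case True
  define C where "C = exp (- x / 2) / (2 powr a * Gamma a * (2 powr b * Gamma b))"
  have Gamma_pos: "0 < Gamma a" "0 < Gamma b" "0 < Gamma (a + b)"
    using a b by (auto intro!: Gamma_real_pos)
  then have C: "0 \<le> C" by (simp add: C_def)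
  have integrand: "ennreal (gamma2_density a (x - y)) * ennreal (gamma2_density b y)
      = ennreal C * ennreal ((x - y) powr (a - 1) * y powr (b - 1) * indicator {0<..<x} y)" for y
  proof (cases "0 < y \<and> y < x")
    case True
    have "exp (- (x - y) / 2) * exp (- y / 2) = exp (- x / 2)"
      by (simp add: exp_add[symmetric] field_simps)
    then have "gamma2_density a (x - y) * gamma2_density b y = C * ((x - y) powr (a - 1) * y powr (b - 1))"
      using True unfolding gamma2_density_def C_def by (simp add: field_simps)
    then show ?thesis using True C
      by (simp add: ennreal_mult'[symmetric] gamma2_density_nonneg less_imp_le[OF a] less_imp_le[OF b])
  qed (auto simp: gamma2_density_def)
  have "(\<integral>\<^sup>+y. ennreal (gamma2_density a (x - y)) * ennreal (gamma2_density b y) \<partial>lborel)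
      = ennreal C * ennreal (x powr (a + b - 1) * Beta b a)"
    by (simp only: integrand, subst nn_integral_cmult) (auto simp: nn_integral_Beta_rescaled a b True)
  also have "\<dots> = ennreal (C * (x powr (a + b - 1) * Beta b a))"
    using C by (simp add: ennreal_mult')
  also have "C * (x powr (a + b - 1) * Beta b a) = gamma2_density (a + b) x"
    using True Gamma_pos unfolding gamma2_density_def C_def Beta_def
    by (simp add: powr_add field_simps)
  finally show ?thesis .
qed

section \<open>The square of a standard normal variable\<close>

lemma SUP_mult_indicator_unbounded:
  fixes F :: "real \<Rightarrow> ennreal"
  assumes c: "\<And>x. \<exists>i. x \<le> c i"
  shows "(SUP i. F x * indicator {0..c i} x) = F x * indicator {0..} x"
proof (cases "0 \<le> x")
  case True
  obtain i where i: "x \<le> c i" using c by blast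
  show ?thesis
  proof (rule antisym)
    show "(SUP i. F x * indicator {0..c i} x) \<le> F x * indicator {0..} x"
      by (rule SUP_least) (auto simp: indicator_def)
    show "F x * indicator {0..} x \<le> (SUP i. F x * indicator {0..c i} x)"
      by (rule SUP_upper2[of i]) (use True i in \<open>auto simp: indicator_def\<close>)
  qed
qed (auto simp: indicator_def)

text \<open>The library covers bounded intervals \<open>[0, N]\<close>; the half-line follows by monotone
  convergence.\<close>
lemma nn_integral_square_substitution:
  fixes G :: "real \<Rightarrow> ennreal"
  assumes [measurable]: "G \<in> borel_measurable borel"
  shows "(\<integral>\<^sup>+t. G t * indicator {0..} t \<partial>lborel)
    = (\<integral>\<^sup>+z. G (z\<^sup>2) * ennreal (2 * z) * indicator {0..} z \<partial>lborel)"
proof -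
  have bounded: "(\<integral>\<^sup>+t. G t * indicator {0..(real (Suc i))\<^sup>2} t \<partial>lborel)
      = (\<integral>\<^sup>+z. G (z\<^sup>2) * ennreal (2 * z) * indicator {0..real (Suc i)} z \<partial>lborel)" for i
  proof -
    have "(\<integral>\<^sup>+t. G t * indicator {0\<^sup>2..(real (Suc i))\<^sup>2} t \<partial>lborel)
        = (\<integral>\<^sup>+z. G (z\<^sup>2) * ennreal (2 * z) * indicator {0..real (Suc i)} z \<partial>lborel)"
      by (rule nn_integral_substitution_aux[where g = "\<lambda>z. z\<^sup>2" and g' = "\<lambda>z. 2 * z"])
        (auto intro!: derivative_eq_intros continuous_intros)
    then show ?thesis by simp
  qed
  have unbounded: "\<exists>i. x \<le> real (Suc i)" "\<exists>i. x \<le> (real (Suc i))\<^sup>2" for x :: real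
  proof -
    obtain i where "x \<le> real i" using real_arch_simple by blast
    then have i: "x \<le> real (Suc i)" by simp
    moreover have "real (Suc i) \<le> (real (Suc i))\<^sup>2" by (simp add: power2_eq_square)
    ultimately show "\<exists>i. x \<le> real (Suc i)" "\<exists>i. x \<le> (real (Suc i))\<^sup>2"
      by (meson order_trans)+
  qed
  have incseq_sq: "incseq (\<lambda>i t. G t * indicator {0..(real (Suc i))\<^sup>2} t)"
  proof (intro incseq_SucI le_funI)
    fix i t
    have "(real (Suc i))\<^sup>2 \<le> (real (Suc (Suc i)))\<^sup>2" by (intro power_mono) auto
    then have "t \<le> (real (Suc i))\<^sup>2 \<Longrightarrow> t \<le> (real (Suc (Suc i)))\<^sup>2" by linarith
    then show "G t * indicator {0..(real (Suc i))\<^sup>2} t \<le> G t * indicator {0..(real (Suc (Suc i)))\<^sup>2} t"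
      by (auto simp: indicator_def simp del: of_nat_Suc)
  qed
  have incseq_lin: "incseq (\<lambda>i z. G (z\<^sup>2) * ennreal (2 * z) * indicator {0..real (Suc i)} z)"
    by (auto simp: incseq_def le_fun_def indicator_def)
  have "(\<integral>\<^sup>+t. G t * indicator {0..} t \<partial>lborel)
      = (\<integral>\<^sup>+t. (SUP i. G t * indicator {0..(real (Suc i))\<^sup>2} t) \<partial>lborel)"
    by (simp only: SUP_mult_indicator_unbounded[OF unbounded(2)])
  also have "\<dots> = (SUP i. \<integral>\<^sup>+t. G t * indicator {0..(real (Suc i))\<^sup>2} t \<partial>lborel)"
    by (rule nn_integral_monotone_convergence_SUP[OF incseq_sq]) measurable
  also have "\<dots> = (SUP i. \<integral>\<^sup>+z. G (z\<^sup>2) * ennreal (2 * z) * indicator {0..real (Suc i)} z \<partial>lborel)"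
    by (simp only: bounded)
  also have "\<dots> = (\<integral>\<^sup>+z. (SUP i. G (z\<^sup>2) * ennreal (2 * z) * indicator {0..real (Suc i)} z) \<partial>lborel)"
    by (rule nn_integral_monotone_convergence_SUP[OF incseq_lin, symmetric]) measurable
  also have "\<dots> = (\<integral>\<^sup>+z. G (z\<^sup>2) * ennreal (2 * z) * indicator {0..} z \<partial>lborel)"
    by (simp only: SUP_mult_indicator_unbounded[OF unbounded(1), where F = "\<lambda>z. G (z\<^sup>2) * ennreal (2 * z)"])
  finally show ?thesis .
qed

lemma nn_integral_lborel_even:
  fixes g :: "real \<Rightarrow> ennreal"
  assumes [measurable]: "g \<in> borel_measurable borel" and even: "\<And>z. g (- z) = g z"
  shows "(\<integral>\<^sup>+z. g z \<partial>lborel) = (\<integral>\<^sup>+z. 2 * g z * indicator {0..} z \<partial>lborel)"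
proof -
  have "(\<integral>\<^sup>+z. g z * indicator {..<0} z \<partial>lborel)
      = ennreal \<bar>-1\<bar> * (\<integral>\<^sup>+z. g (0 + -1 * z) * indicator {..<0} (0 + -1 * z) \<partial>lborel)"
    by (rule nn_integral_real_affine) auto
  also have "\<dots> = (\<integral>\<^sup>+z. g z * indicator {0<..} z \<partial>lborel)"
    by (auto intro!: nn_integral_cong simp: even indicator_def)
  also have "\<dots> = (\<integral>\<^sup>+z. g z * indicator {0..} z \<partial>lborel)"
    by (rule nn_integral_cong_AE, rule AE_mp[OF AE_lborel_singleton[of 0]]) (auto simp: indicator_def)
  finally have reflect: "(\<integral>\<^sup>+z. g z * indicator {..<0} z \<partial>lborel) = (\<integral>\<^sup>+z. g z * indicator {0..} z \<partial>lborel)" .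
  have "(\<integral>\<^sup>+z. g z \<partial>lborel) = (\<integral>\<^sup>+z. g z * indicator {0..} z + g z * indicator {..<0} z \<partial>lborel)"
    by (rule nn_integral_cong) (auto simp: indicator_def)
  also have "\<dots> = (\<integral>\<^sup>+z. g z * indicator {0..} z \<partial>lborel) + (\<integral>\<^sup>+z. g z * indicator {..<0} z \<partial>lborel)"
    by (rule nn_integral_add) auto
  also have "\<dots> = 2 * (\<integral>\<^sup>+z. g z * indicator {0..} z \<partial>lborel)"
    by (simp only: reflect mult_2)
  also have "\<dots> = (\<integral>\<^sup>+z. 2 * g z * indicator {0..} z \<partial>lborel)"
    by (subst nn_integral_cmult[symmetric]) (auto simp: mult.assoc)
  finally show ?thesis .
qed

lemma gamma2_density_half_square:
  assumes z: "0 < z"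
  shows "gamma2_density (1/2) (z\<^sup>2) * (2 * z) = 2 * std_normal_density z"
proof -
  have "(z\<^sup>2) powr (1/2 - 1) = 1 / z"
    using z by (simp add: powr_minus_divide powr_half_sqrt[symmetric])
  moreover have "2 powr (1/2) * Gamma (1/2 :: real) = sqrt (2 * pi)"
    by (simp add: powr_half_sqrt Gamma_one_half_real real_sqrt_mult)
  ultimately show ?thesis
    using z by (simp add: gamma2_density_def std_normal_density_def field_simps)
qed

lemma distr_std_normal_square:
  "distr (density lborel std_normal_density) lborel (\<lambda>z. z\<^sup>2) = density lborel (gamma2_density (1/2))"
proof (rule measure_eqI)
  fix A assume "A \<in> sets (distr (density lborel std_normal_density) lborel (\<lambda>z. z\<^sup>2))"
  then have [measurable]: "A \<in> sets borel" by simp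
  have "emeasure (distr (density lborel std_normal_density) lborel (\<lambda>z. z\<^sup>2)) A
      = (\<integral>\<^sup>+z. ennreal (std_normal_density z) * indicator A (z\<^sup>2) \<partial>lborel)"
  proof -
    have "(\<lambda>z::real. z\<^sup>2) -` A \<inter> space lborel \<in> sets lborel"
      by (rule measurable_sets[of _ lborel borel]) auto
    then show ?thesis
      by (simp add: emeasure_distr emeasure_density indicator_def)
  qed
  also have "\<dots> = (\<integral>\<^sup>+z. 2 * (ennreal (std_normal_density z) * indicator A (z\<^sup>2)) * indicator {0..} z \<partial>lborel)"
    by (rule nn_integral_lborel_even) (auto simp: std_normal_density_def)
  also have "\<dots> = (\<integral>\<^sup>+z. ennreal (gamma2_density (1/2) (z\<^sup>2)) * indicator A (z\<^sup>2) * ennreal (2 * z)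
      * indicator {0..} z \<partial>lborel)"
  proof (rule nn_integral_cong_AE, rule AE_mp[OF AE_lborel_singleton[of 0]], rule AE_I2, intro impI)
    fix z :: real assume "z \<noteq> 0"
    then consider "0 < z" | "z < 0" by linarith
    then show "2 * (ennreal (std_normal_density z) * indicator A (z\<^sup>2)) * indicator {0..} z
        = ennreal (gamma2_density (1/2) (z\<^sup>2)) * indicator A (z\<^sup>2) * ennreal (2 * z) * indicator {0..} z"
    proof cases
      case 1
      then have "ennreal (gamma2_density (1/2) (z\<^sup>2)) * ennreal (2 * z) = ennreal (2 * std_normal_density z)"
        by (simp add: gamma2_density_half_square gamma2_density_nonneg ennreal_mult[symmetric])
      also have "\<dots> = 2 * ennreal (std_normal_density z)"
        by (simp add: ennreal_mult')
      finally show ?thesis by (metis mult.assoc mult.commute)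
    qed (simp add: indicator_def)
  qed
  also have "\<dots> = (\<integral>\<^sup>+t. (ennreal (gamma2_density (1/2) t) * indicator A t) * indicator {0..} t \<partial>lborel)"
    by (rule nn_integral_square_substitution[symmetric]) measurable
  also have "\<dots> = (\<integral>\<^sup>+t. ennreal (gamma2_density (1/2) t) * indicator A t \<partial>lborel)"
    by (auto intro!: nn_integral_cong simp: indicator_def gamma2_density_def)
  also have "\<dots> = emeasure (density lborel (gamma2_density (1/2))) A"
    by (simp add: emeasure_density)
  finally show "emeasure (distr (density lborel std_normal_density) lborel (\<lambda>z. z\<^sup>2)) A
      = emeasure (density lborel (gamma2_density (1/2))) A" .
qed simp

lemma (in prob_space) distributed_normal_square:
  assumes X: "distributed M lborel X (normal_density 0 \<sigma>)" and \<sigma>: "0 < \<sigma>"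
  shows "distributed M lborel (\<lambda>\<omega>. (X \<omega> / \<sigma>)\<^sup>2) (gamma2_density (1/2))"
proof -
  have "distributed M lborel (\<lambda>\<omega>. 0 + (1/\<sigma>) * X \<omega>) (normal_density (0 + (1/\<sigma>) * 0) (\<bar>1/\<sigma>\<bar> * \<sigma>))"
    by (rule normal_density_affine[OF X \<sigma>]) (use \<sigma> in auto)
  then have Z: "distributed M lborel (\<lambda>\<omega>. X \<omega> / \<sigma>) std_normal_density"
    using \<sigma> by simp
  have [measurable]: "(\<lambda>\<omega>. X \<omega> / \<sigma>) \<in> borel_measurable M"
    using distributed_measurable[OF Z] by simp
  have "distr M lborel (\<lambda>\<omega>. (X \<omega> / \<sigma>)\<^sup>2) = distr (distr M lborel (\<lambda>\<omega>. X \<omega> / \<sigma>)) lborel (\<lambda>z. z\<^sup>2)"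
    by (subst distr_distr) (auto simp: comp_def)
  also have "\<dots> = density lborel (gamma2_density (1/2))"
    using distributed_distr_eq_density[OF Z] distr_std_normal_square by simp
  finally show ?thesis unfolding distributed_def by auto
qed

lemma (in prob_space) distributed_sum_gamma2:
  assumes "finite I" "I \<noteq> {}" "indep_vars (\<lambda>_. borel) Y I"
    and "\<And>i. i \<in> I \<Longrightarrow> distributed M lborel (Y i) (gamma2_density (1/2))"
  shows "distributed M lborel (\<lambda>x. \<Sum>i\<in>I. Y i x) (gamma2_density (real (card I) / 2))"
  using assms
proof (induct I rule: finite_ne_induct)
  case (insert i I)
  have "indep_var borel (Y i) borel (\<lambda>\<omega>. \<Sum>i\<in>I. Y i \<omega>)"
    by (rule indep_vars_sum) (use insert in auto)
  moreover have "distributed M lborel (\<lambda>x. \<Sum>i\<in>I. Y i x) (gamma2_density (real (card I) / 2))"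
    using insert by (auto intro: indep_vars_subset)
  ultimately have "distributed M lborel (\<lambda>x. Y i x + (\<Sum>i\<in>I. Y i x))
      (\<lambda>x. \<integral>\<^sup>+y. ennreal (gamma2_density (1/2) (x - y)) * ennreal (gamma2_density (real (card I) / 2) y) \<partial>lborel)"
    using insert by (intro distributed_convolution) auto
  moreover have "card I > 0" using insert by (simp add: card_gt_0_iff)
  ultimately have "distributed M lborel (\<lambda>x. Y i x + (\<Sum>i\<in>I. Y i x)) (gamma2_density (1/2 + real (card I) / 2))"
    by (simp add: convolution_gamma2_density)
  moreover have "1/2 + real (card I) / 2 = real (card (insert i I)) / 2"
    using insert by simp
  ultimately show ?case using insert by simp
qed simp

abbreviation centered_normal :: "real \<Rightarrow> real measure" where
  "centered_normal \<sigma> \<equiv> density lborel (normal_density 0 \<sigma>)"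

lemma prob_space_gauss_diag: "\<forall>i<n. 0 < s i \<Longrightarrow> prob_space (gauss_diag n s)"
  unfolding gauss_diag_def by (rule prob_space_PiM) (auto intro: prob_space_normal_density)

lemma sets_gauss_diag: "sets (gauss_diag n s) = sets (PiM {..<n} (\<lambda>_. borel))"
  unfolding gauss_diag_def by (rule sets_PiM_cong) auto

lemma space_gauss_diag: "space (gauss_diag n s) = space (PiM {..<n} (\<lambda>_. borel :: real measure))"
  by (rule sets_eq_imp_space_eq[OF sets_gauss_diag])

lemma measurable_gauss_diag_component:
  assumes "i < n"
  shows "(\<lambda>x. x i) \<in> measurable (gauss_diag n s) borel"
  using assms by (simp add: measurable_cong_sets[OF sets_gauss_diag refl])

lemma distr_gauss_diag_component:
  assumes pos: "\<forall>i<n. 0 < s i" and i: "i < n"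
  shows "distr (gauss_diag n s) borel (\<lambda>x. x i) = centered_normal (s i)"
proof -
  have "distr (gauss_diag n s) borel (\<lambda>x. x i) = distr (gauss_diag n s) (centered_normal (s i)) (\<lambda>x. x i)"
    by (rule distr_cong) auto
  also have "\<dots> = centered_normal (s i)"
    unfolding gauss_diag_def
    by (rule distr_PiM_component) (use pos i in \<open>auto intro: prob_space_normal_density\<close>)
  finally show ?thesis .
qed

lemma distributed_gauss_diag_component:
  assumes "\<forall>i<n. 0 < s i" and "i < n"
  shows "distributed (gauss_diag n s) lborel (\<lambda>x. x i) (normal_density 0 (s i))"
proof -
  have "distr (gauss_diag n s) lborel (\<lambda>x. x i) = distr (gauss_diag n s) borel (\<lambda>x. x i)"
    by (rule distr_cong) auto
  then show ?thesis
    using assms measurable_gauss_diag_component[OF assms(2)]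
    by (simp add: distributed_def distr_gauss_diag_component)
qed

lemma indep_vars_gauss_diag_components:
  assumes pos: "\<forall>i<n. 0 < s i" and n: "0 < n"
  shows "prob_space.indep_vars (gauss_diag n s) (\<lambda>_. borel) (\<lambda>i x. x i) {..<n}"
proof -
  interpret prob_space "gauss_diag n s" using prob_space_gauss_diag[OF pos] .
  have "{..<n} \<noteq> {}" using n by auto
  moreover have "distr (gauss_diag n s) (PiM {..<n} (\<lambda>i. borel)) (\<lambda>x. \<lambda>i\<in>{..<n}. x i) = gauss_diag n s"
  proof -
    have "distr (gauss_diag n s) (PiM {..<n} (\<lambda>i. borel)) (\<lambda>x. \<lambda>i\<in>{..<n}. x i)
        = distr (gauss_diag n s) (gauss_diag n s) (\<lambda>x. x)"
      by (rule distr_cong)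
        (auto simp: sets_gauss_diag space_gauss_diag space_PiM PiE_def extensional_def)
    then show ?thesis by simp
  qed
  moreover have "gauss_diag n s = PiM {..<n} (\<lambda>i. distr (gauss_diag n s) borel (\<lambda>x. x i))"
    unfolding gauss_diag_def
    by (rule PiM_cong) (use distr_gauss_diag_component[OF pos] in \<open>auto simp: gauss_diag_def\<close>)
  ultimately show ?thesis
    using measurable_gauss_diag_component by (subst indep_vars_iff_distr_eq_PiM') auto
qed

section \<open>The chi-square distribution\<close>

abbreviation chi2_distribution :: "nat \<Rightarrow> real measure" where
  "chi2_distribution m \<equiv> density lborel (chi2_density m)"

definition chi2_statistic :: "nat \<Rightarrow> (nat \<Rightarrow> real) \<Rightarrow> (nat \<Rightarrow> real) \<Rightarrow> real" where
  "chi2_statistic m s x = (\<Sum>i<m. (x i / s i)\<^sup>2)"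

lemma chi2_density_nonneg: "0 \<le> chi2_density m t"
  by (simp add: chi2_density_eq_gamma2_density gamma2_density_nonneg)

lemma chi2_density_pos: "1 \<le> m \<Longrightarrow> 0 < t \<Longrightarrow> 0 < chi2_density m t"
  by (simp add: chi2_density_def)

lemma borel_measurable_chi2_density[measurable]: "chi2_density m \<in> borel_measurable borel"
  by (simp add: chi2_density_eq_gamma2_density)

lemma distributed_chi2_statistic:
  assumes pos: "\<forall>i<n. 0 < s i" and m: "1 \<le> m" "m \<le> n"
  shows "distributed (gauss_diag n s) lborel (chi2_statistic m s) (chi2_density m)"
proof -
  interpret prob_space "gauss_diag n s" using prob_space_gauss_diag[OF pos] .
  have "indep_vars (\<lambda>_. borel) (\<lambda>i x. (\<lambda>y. (y / s i)\<^sup>2) (x i)) {..<n}"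
    by (rule indep_vars_compose2[OF indep_vars_gauss_diag_components[OF pos]]) (use m in auto)
  then have "indep_vars (\<lambda>_. borel) (\<lambda>i x. (x i / s i)\<^sup>2) {..<m}"
    by (rule indep_vars_subset) (use m in auto)
  moreover have "distributed (gauss_diag n s) lborel (\<lambda>x. (x i / s i)\<^sup>2) (gamma2_density (1/2))"
    if "i \<in> {..<m}" for i
    by (rule distributed_normal_square[OF distributed_gauss_diag_component[OF pos]])
      (use that m pos in auto)
  moreover have "0 \<in> {..<m}" using m by simp
  ultimately show ?thesis
    using distributed_sum_gamma2[of "{..<m}" "\<lambda>i x. (x i / s i)\<^sup>2"]
    by (auto simp: chi2_statistic_def[abs_def] chi2_density_eq_gamma2_density)
qed

lemma measure_density_eq_set_integral:
  fixes f :: "real \<Rightarrow> real"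
  assumes [measurable]: "f \<in> borel_measurable borel" "A \<in> sets borel" and "\<And>x. 0 \<le> f x"
  shows "measure (density lborel f) A = (LINT x:A|lborel. f x)"
proof -
  have "measure (density lborel f) A = (\<integral>x. indicator A x \<partial>density lborel f)"
    by simp
  also have "\<dots> = (\<integral>x. f x *\<^sub>R indicator A x \<partial>lborel)"
    by (rule integral_density) (use assms in auto)
  finally show ?thesis by (simp add: set_lebesgue_integral_def mult.commute)
qed

lemma chi2_cdf_eq_measure: "chi2_cdf m x = measure (chi2_distribution m) {..x}"
  unfolding chi2_cdf_def by (rule measure_density_eq_set_integral[symmetric]) (auto intro: chi2_density_nonneg)

lemma measure_chi2_statistic_le:
  assumes pos: "\<forall>i<n. 0 < s i" and m: "1 \<le> m" "m \<le> n"
  shows "measure (gauss_diag n s) {x \<in> space (gauss_diag n s). chi2_statistic m s x \<le> u} = chi2_cdf m u"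
proof -
  note D = distributed_chi2_statistic[OF pos m]
  have "measure (gauss_diag n s) {x \<in> space (gauss_diag n s). chi2_statistic m s x \<le> u}
      = measure (distr (gauss_diag n s) lborel (chi2_statistic m s)) {..u}"
    using distributed_measurable[OF D] by (subst measure_distr) (auto simp: vimage_def Int_def conj_commute)
  then show ?thesis
    using distributed_distr_eq_density[OF D] by (simp add: chi2_cdf_eq_measure)
qed

text \<open>The law of \<open>chi2_statistic m (\<lambda>_. 1)\<close> under the standard Gaussian is a probability
  measure, hence so is the chi-square distribution.\<close>
lemma real_distribution_chi2:
  assumes m: "1 \<le> m"
  shows "real_distribution (chi2_distribution m)"
proof -
  have pos: "\<forall>i<m. 0 < (\<lambda>_. 1 :: real) i" by simp
  interpret prob_space "gauss_diag m (\<lambda>_. 1)" using prob_space_gauss_diag[OF pos] .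
  note D = distributed_chi2_statistic[OF pos m order_refl]
  have "prob_space (distr (gauss_diag m (\<lambda>_. 1)) lborel (chi2_statistic m (\<lambda>_. 1)))"
    by (rule prob_space_distr) (use distributed_measurable[OF D] in simp)
  then show ?thesis
    using distributed_distr_eq_density[OF D] by (simp add: real_distribution_def real_distribution_axioms_def)
qed

lemma chi2_cdf_eq_cdf: "1 \<le> m \<Longrightarrow> chi2_cdf m = cdf (chi2_distribution m)"
  by (auto simp: fun_eq_iff chi2_cdf_eq_measure cdf_def2 real_distribution_chi2)

lemma chi2_cdf_nonpos: "x \<le> 0 \<Longrightarrow> chi2_cdf m x = 0"
proof -
  assume "x \<le> 0"
  then have zero: "\<And>t. ennreal (chi2_density m t) * indicator {..x} t = 0"
    by (auto simp: chi2_density_def indicator_def)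
  have "emeasure (chi2_distribution m) {..x} = (\<integral>\<^sup>+t. ennreal (chi2_density m t) * indicator {..x} t \<partial>lborel)"
    by (rule emeasure_density) auto
  also have "\<dots> = 0" by (simp only: zero) simp
  finally show ?thesis by (simp add: chi2_cdf_eq_measure measure_def)
qed

lemma isCont_chi2_cdf:
  assumes m: "1 \<le> m"
  shows "isCont (chi2_cdf m) x"
proof -
  interpret real_distribution "chi2_distribution m" by (rule real_distribution_chi2[OF m])
  have "emeasure (chi2_distribution m) {x} = (\<integral>\<^sup>+t. ennreal (chi2_density m t) * indicator {x} t \<partial>lborel)"
    by (rule emeasure_density) auto
  also have "\<dots> = 0"
    by (subst nn_integral_0_iff_AE, simp, rule AE_mp[OF AE_lborel_singleton[of x]], intro AE_I2)
      (auto simp: indicator_def)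
  finally show ?thesis
    by (simp add: chi2_cdf_eq_cdf[OF m] isCont_cdf measure_def)
qed

lemma chi2_cdf_strict_mono:
  assumes m: "1 \<le> m" and xy: "0 \<le> x" "x < y"
  shows "chi2_cdf m x < chi2_cdf m y"
proof -
  interpret real_distribution "chi2_distribution m" by (rule real_distribution_chi2[OF m])
  have "{t \<in> space lborel. ennreal (chi2_density m t) * indicator {x<..y} t \<noteq> 0} = {x<..y}"
    using chi2_density_pos[OF m] xy by (auto simp: indicator_def ennreal_eq_0_iff not_le)
  then have "(\<integral>\<^sup>+t. ennreal (chi2_density m t) * indicator {x<..y} t \<partial>lborel) \<noteq> 0"
    using xy by (subst nn_integral_0_iff) auto
  then have "emeasure (chi2_distribution m) {x<..y} \<noteq> 0"
    by (simp add: emeasure_density)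
  moreover have "emeasure (chi2_distribution m) {x<..y} < \<top>"
    by (simp add: less_top[symmetric])
  ultimately have "measure (chi2_distribution m) {x<..y} > 0"
    by (simp add: measure_def enn2real_positive_iff zero_less_iff_neq_zero)
  then show ?thesis
    using cdf_diff_eq[OF xy(2)] by (simp add: chi2_cdf_eq_cdf[OF m])
qed

text \<open>On \<open>(0, 1)\<close> the definite description in \<open>chi2_cdf_inv\<close> is proper: the CDF vanishes
  on \<open>(-\<infinity>, 0]\<close>, tends to 1 and is continuous (existence) and strictly increasing on
  \<open>[0, \<infinity>)\<close> (uniqueness).\<close>
lemma chi2_cdf_chi2_cdf_inv:
  assumes m: "1 \<le> m" and p: "0 < p" "p < 1"
  shows "chi2_cdf m (chi2_cdf_inv m p) = p"
proof -
  interpret real_distribution "chi2_distribution m" by (rule real_distribution_chi2[OF m])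
  have "eventually (\<lambda>x. p < chi2_cdf m x) at_top"
    using order_tendstoD(1)[OF cdf_lim_at_top_prob p(2)] by (simp add: chi2_cdf_eq_cdf[OF m])
  then obtain N where N: "\<And>x. N \<le> x \<Longrightarrow> p < chi2_cdf m x"
    by (auto simp: eventually_at_top_linorder)
  define b where "b = max N 0"
  have b: "0 \<le> b" "p < chi2_cdf m b" using N by (auto simp: b_def)
  have "\<exists>t. 0 \<le> t \<and> t \<le> b \<and> chi2_cdf m t = p"
    using p b isCont_chi2_cdf[OF m] by (intro IVT) (auto simp: chi2_cdf_nonpos)
  then obtain t where t: "0 \<le> t" "chi2_cdf m t = p" by blast
  moreover have "t \<noteq> 0" using t p chi2_cdf_nonpos[of 0 m] by auto
  ultimately have t_pos: "0 < t" by simp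
  have unique: "x = t" if "0 < x" "chi2_cdf m x = p" for x
  proof (rule ccontr)
    assume "x \<noteq> t"
    then have "x < t \<or> t < x" by linarith
    then show False
      using chi2_cdf_strict_mono[OF m, of x t] chi2_cdf_strict_mono[OF m, of t x] that t by force
  qed
  have "chi2_cdf_inv m p = t"
    unfolding chi2_cdf_inv_def by (rule the_equality) (use t t_pos unique in blast)+
  with t show ?thesis by simp
qed

lemma prod_indicator_eq_indicator_PiE:
  assumes "finite I" "x \<in> extensional I"
  shows "(\<Prod>i\<in>I. indicator (A i) (x i) :: ennreal) = indicator (PiE I A) x"
proof (cases "x \<in> PiE I A")
  case False
  then obtain j where "j \<in> I" "x j \<notin> A j" using assms(2) by (auto simp: PiE_def Pi_def)
  then show ?thesis using False assms(1) by (auto simp: indicator_def intro!: prod_zero)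
qed (auto simp: indicator_def PiE_def Pi_def)

text \<open>The factors outside \<open>I\<close> are replaced by a one-point space so that the locale
  \<open>product_sigma_finite\<close> applies.\<close>
lemma density_PiM_prod:
  fixes M :: "'i \<Rightarrow> 'a measure" and r :: "'i \<Rightarrow> 'a \<Rightarrow> ennreal"
  assumes I: "finite I" and M: "\<And>i. i \<in> I \<Longrightarrow> prob_space (M i)"
    and r: "\<And>i. i \<in> I \<Longrightarrow> r i \<in> borel_measurable (M i)"
    and R: "\<And>i. i \<in> I \<Longrightarrow> prob_space (density (M i) (r i))"
  shows "density (PiM I M) (\<lambda>x. \<Prod>i\<in>I. r i (x i)) = PiM I (\<lambda>i. density (M i) (r i))"
proof -
  define M0 where "M0 i = (if i \<in> I then M i else count_space {undefined})" for i
  define M1 where "M1 i = (if i \<in> I then density (M i) (r i) else count_space {undefined})" for i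
  have point: "prob_space (count_space {undefined})" by (rule prob_spaceI) simp
  interpret P0: product_sigma_finite M0
    unfolding product_sigma_finite_def M0_def
    using M point by (auto intro!: prob_space_imp_sigma_finite)
  interpret P1: product_sigma_finite M1
    unfolding product_sigma_finite_def M1_def
    using R point by (auto intro!: prob_space_imp_sigma_finite)
  have [measurable]: "r i \<in> borel_measurable (M0 i)" if "i \<in> I" for i
    using r[OF that] that by (simp add: M0_def)
  have "density (PiM I M0) (\<lambda>x. \<Prod>i\<in>I. r i (x i)) = PiM I M1"
  proof (rule P1.PiM_eqI[OF I])
    show "sets (density (PiM I M0) (\<lambda>x. \<Prod>i\<in>I. r i (x i))) = sets (PiM I M1)"
      by (simp, rule sets_PiM_cong) (auto simp: M0_def M1_def)
    fix A assume "\<And>i. i \<in> I \<Longrightarrow> A i \<in> sets (M1 i)"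
    then have A[measurable]: "\<And>i. i \<in> I \<Longrightarrow> A i \<in> sets (M0 i)"
      by (auto simp: M0_def M1_def)
    have "emeasure (density (PiM I M0) (\<lambda>x. \<Prod>i\<in>I. r i (x i))) (PiE I A)
        = (\<integral>\<^sup>+x. (\<Prod>i\<in>I. r i (x i)) * indicator (PiE I A) x \<partial>PiM I M0)"
      by (rule emeasure_density) (auto intro: sets_PiM_I_finite[OF I A])
    also have "\<dots> = (\<integral>\<^sup>+x. (\<Prod>i\<in>I. r i (x i) * indicator (A i) (x i)) \<partial>PiM I M0)"
      by (rule nn_integral_cong)
        (auto simp: prod.distrib prod_indicator_eq_indicator_PiE[OF I] space_PiM PiE_def)
    also have "\<dots> = (\<Prod>i\<in>I. \<integral>\<^sup>+y. r i y * indicator (A i) y \<partial>M0 i)"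
      by (rule P0.product_nn_integral_prod[OF I]) measurable
    also have "\<dots> = (\<Prod>i\<in>I. emeasure (M1 i) (A i))"
      using A r by (intro prod.cong) (auto simp: M1_def M0_def emeasure_density)
    finally show "emeasure (density (PiM I M0) (\<lambda>x. \<Prod>i\<in>I. r i (x i))) (PiE I A)
        = (\<Prod>i\<in>I. emeasure (M1 i) (A i))" .
  qed
  moreover have "PiM I M = PiM I M0" "PiM I (\<lambda>i. density (M i) (r i)) = PiM I M1"
    by (auto intro!: PiM_cong simp: M0_def M1_def)
  ultimately show ?thesis by simp
qed

section \<open>The Neyman--Pearson lemma\<close>

text \<open>Integrate the pointwise inequality \<open>(L - l) (h - 1\<^sub>S) \<ge> 0\<close> against \<open>P0\<close>.\<close>
lemma neyman_pearson_lower_bound: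
  fixes P0 :: "'a measure" and L h :: "'a \<Rightarrow> real"
  assumes P0: "prob_space P0" and P1: "prob_space (density P0 L)"
    and [measurable]: "L \<in> borel_measurable P0" "h \<in> borel_measurable P0" "S \<in> sets P0"
    and L_nonneg: "\<And>x. 0 \<le> L x" and h: "\<And>x. 0 \<le> h x \<and> h x \<le> 1"
    and separated: "\<And>x. x \<in> space P0 \<Longrightarrow> (x \<in> S \<and> L x \<le> l) \<or> (x \<notin> S \<and> l \<le> L x)"
    and same_size: "measure P0 S = (\<integral>x. h x \<partial>P0)"
  shows "measure (density P0 L) S \<le> (\<integral>x. h x \<partial>density P0 L)"
proof -
  interpret P0: prob_space P0 by (rule P0)
  interpret P1: prob_space "density P0 L" by (rule P1)
  have integrable: "integrable P0 (\<lambda>x. L x * h x)" "integrable P0 (\<lambda>x. L x * indicator S x)"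
    "integrable P0 h" "integrable P0 (indicator S :: 'a \<Rightarrow> real)"
  proof -
    have "integrable (density P0 L) h" "integrable (density P0 L) (indicator S :: 'a \<Rightarrow> real)"
      using h by (auto intro!: P1.integrable_const_bound[where B = 1] simp: indicator_def)
    then show "integrable P0 (\<lambda>x. L x * h x)" "integrable P0 (\<lambda>x. L x * indicator S x)"
      using L_nonneg by (auto simp: integrable_density)
    show "integrable P0 h" "integrable P0 (indicator S :: 'a \<Rightarrow> real)"
      using h by (auto intro!: P0.integrable_const_bound[where B = 1] simp: indicator_def)
  qed
  have "0 = (\<integral>x. l * (h x - indicator S x) \<partial>P0)"
    using integrable same_size by simp
  also have "\<dots> \<le> (\<integral>x. L x * (h x - indicator S x) \<partial>P0)"
  proof (rule integral_mono)
    fix x assume "x \<in> space P0"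
    from separated[OF this]
    show "l * (h x - indicator S x) \<le> L x * (h x - indicator S x)"
    proof
      assume "x \<in> S \<and> L x \<le> l"
      then show ?thesis using h[of x] by (simp add: mult_right_mono_neg)
    next
      assume "x \<notin> S \<and> l \<le> L x"
      then show ?thesis using h[of x] by (simp add: mult_right_mono)
    qed
  qed (use integrable in \<open>auto simp: right_diff_distrib\<close>)
  also have "\<dots> = (\<integral>x. L x * h x \<partial>P0) - (\<integral>x. L x * indicator S x \<partial>P0)"
    using integrable by (simp add: right_diff_distrib)
  also have "\<dots> = (\<integral>x. h x \<partial>density P0 L) - (\<integral>x. indicator S x \<partial>density P0 L)"
    by (subst (1 2) integral_density) (use L_nonneg in auto)
  also have "\<dots> = (\<integral>x. h x \<partial>density P0 L) - measure (density P0 L) S"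
    by simp
  finally show ?thesis by simp
qed

section \<open>Rescaling the first coordinates\<close>

definition scale_first :: "nat \<Rightarrow> real \<Rightarrow> (nat \<Rightarrow> real) \<Rightarrow> nat \<Rightarrow> real" where
  "scale_first m k s = (\<lambda>i. if i < m then k * s i else s i)"

definition scale_first_lr :: "nat \<Rightarrow> real \<Rightarrow> (nat \<Rightarrow> real) \<Rightarrow> (nat \<Rightarrow> real) \<Rightarrow> real" where
  "scale_first_lr m k s x = (1/k) ^ m * exp ((1 - 1/k\<^sup>2) * chi2_statistic m s x / 2)"

lemma normal_density_scale:
  assumes "0 < \<sigma>" "0 < k"
  shows "normal_density 0 \<sigma> y * ((1/k) * exp ((1 - 1/k\<^sup>2) * (y/\<sigma>)\<^sup>2 / 2)) = normal_density 0 (k * \<sigma>) y"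
proof -
  have "sqrt (2 * pi * (k * \<sigma>)\<^sup>2) = k * sqrt (2 * pi * \<sigma>\<^sup>2)"
    using assms by (simp add: power_mult_distrib real_sqrt_mult)
  moreover have "exp (- y\<^sup>2 / (2 * \<sigma>\<^sup>2)) * exp ((1 - 1/k\<^sup>2) * (y/\<sigma>)\<^sup>2 / 2) = exp (- y\<^sup>2 / (2 * (k * \<sigma>)\<^sup>2))"
    using assms by (simp add: exp_add[symmetric] field_simps power2_eq_square)
  ultimately show ?thesis
    using assms by (simp add: normal_density_def field_simps)
qed

lemma scale_first_lr_eq_prod:
  assumes "0 < k" "m \<le> n"
  shows "(\<Prod>i<n. ennreal (if i < m then (1/k) * exp ((1 - 1/k\<^sup>2) * (x i / s i)\<^sup>2 / 2) else 1))
    = ennreal (scale_first_lr m k s x)"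
proof -
  let ?g = "\<lambda>i. if i < m then (1/k) * exp ((1 - 1/k\<^sup>2) * (x i / s i)\<^sup>2 / 2) else 1"
  have "(\<Prod>i<n. ennreal (?g i)) = ennreal (\<Prod>i<n. ?g i)"
    by (rule prod_ennreal) (use assms in auto)
  also have "(\<Prod>i<n. ?g i) = (\<Prod>i\<in>{..<m} \<union> {m..<n}. ?g i)"
    using assms by (intro prod.cong) auto
  also have "\<dots> = (\<Prod>i<m. ?g i) * (\<Prod>i\<in>{m..<n}. ?g i)"
    by (rule prod.union_disjoint) auto
  also have "\<dots> = (\<Prod>i<m. (1/k) * exp ((1 - 1/k\<^sup>2) * (x i / s i)\<^sup>2 / 2))"
    by simp
  also have "\<dots> = (1/k) ^ m * (\<Prod>i<m. exp ((1 - 1/k\<^sup>2) * (x i / s i)\<^sup>2 / 2))"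
    by (simp only: prod.distrib prod_constant card_lessThan)
  also have "\<dots> = scale_first_lr m k s x"
    by (simp add: scale_first_lr_def chi2_statistic_def exp_sum sum_distrib_left sum_divide_distrib)
  finally show ?thesis .
qed

lemma gauss_diag_scale_first:
  assumes pos: "\<forall>i<n. 0 < s i" and k: "0 < k" and mn: "m \<le> n"
  shows "gauss_diag n (scale_first m k s) = density (gauss_diag n s) (scale_first_lr m k s)"
proof -
  define r where "r i y = ennreal (if i < m then (1/k) * exp ((1 - 1/k\<^sup>2) * (y / s i)\<^sup>2 / 2) else 1)"
    for i y
  have [measurable]: "r i \<in> borel_measurable borel" for i unfolding r_def by measurable
  have factor: "density (centered_normal (s i)) (r i) = centered_normal (scale_first m k s i)"
    if "i < n" for i
  proof -
    have "ennreal (normal_density 0 (s i) y) * r i y = ennreal (normal_density 0 (scale_first m k s i) y)" for y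
      using normal_density_scale[of "s i" k y] pos that k
      by (auto simp: r_def scale_first_def ennreal_mult[symmetric] normal_density_nonneg)
    then show ?thesis by (simp add: density_density_eq)
  qed
  have "density (gauss_diag n s) (\<lambda>x. \<Prod>i<n. r i (x i)) = PiM {..<n} (\<lambda>i. density (centered_normal (s i)) (r i))"
    unfolding gauss_diag_def
    using pos k factor
    by (intro density_PiM_prod) (auto intro: prob_space_normal_density simp: scale_first_def)
  also have "\<dots> = gauss_diag n (scale_first m k s)"
    unfolding gauss_diag_def by (rule PiM_cong) (auto simp: factor)
  finally show ?thesis
    by (simp add: r_def scale_first_lr_eq_prod[OF k mn])
qed

lemma chi2_statistic_scale_first:
  assumes pos: "\<forall>i<n. 0 < s i" and k: "0 < k" and mn: "m \<le> n"
  shows "chi2_statistic m s x = k\<^sup>2 * chi2_statistic m (scale_first m k s) x"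
  unfolding chi2_statistic_def sum_distrib_left
  using pos k mn by (intro sum.cong) (auto simp: scale_first_def power_divide power_mult_distrib)

lemma measure_scale_first_chi2_statistic_le:
  assumes pos: "\<forall>i<n. 0 < s i" and k: "0 < k" and m: "1 \<le> m" "m \<le> n"
  shows "measure (gauss_diag n (scale_first m k s)) {x \<in> space (gauss_diag n s). chi2_statistic m s x \<le> u}
    = chi2_cdf m (u / k\<^sup>2)"
proof -
  have pos': "\<forall>i<n. 0 < scale_first m k s i" using pos k by (simp add: scale_first_def)
  have "chi2_statistic m s x \<le> u \<longleftrightarrow> chi2_statistic m (scale_first m k s) x \<le> u / k\<^sup>2" for x
    using k by (simp add: chi2_statistic_scale_first[OF pos k m(2)] le_divide_eq mult.commute)
  then show ?thesis
    using measure_chi2_statistic_le[OF pos' m, of "u / k\<^sup>2"] by (simp add: space_gauss_diag)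
qed

context
  fixes n m :: nat and s :: "nat \<Rightarrow> real" and k :: real and h :: "(nat \<Rightarrow> real) \<Rightarrow> real"
  assumes pos: "\<forall>i<n. 0 < s i" and k: "0 < k" and m: "1 \<le> m" "m \<le> n"
    and h_measurable[measurable]: "h \<in> borel_measurable (gauss_diag n s)"
    and h_bounded: "\<forall>x. 0 \<le> h x \<and> h x \<le> 1"
begin

lemma borel_measurable_chi2_statistic[measurable]:
  "chi2_statistic m s \<in> borel_measurable (gauss_diag n s)"
  using distributed_measurable[OF distributed_chi2_statistic[OF pos m]] by simp

text \<open>The likelihood ratio is a monotone function of \<open>(1 - 1/k\<^sup>2) \<chi>\<close>, where \<open>\<chi>\<close> is the
  chi-square statistic, so any region bounded by a level set of that quantity is a
  Neyman--Pearson region.\<close>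
lemma scale_first_expectation_ge:
  assumes S: "S \<in> sets (gauss_diag n s)" "measure (gauss_diag n s) S = (\<integral>x. h x \<partial>gauss_diag n s)"
    and separated: "\<And>x. x \<in> space (gauss_diag n s) \<Longrightarrow>
      (x \<in> S \<and> (1 - 1/k\<^sup>2) * chi2_statistic m s x \<le> c) \<or> (x \<notin> S \<and> c \<le> (1 - 1/k\<^sup>2) * chi2_statistic m s x)"
  shows "measure (gauss_diag n (scale_first m k s)) S \<le> (\<integral>x. h x \<partial>gauss_diag n (scale_first m k s))"
proof -
  have pos': "\<forall>i<n. 0 < scale_first m k s i" using pos k by (simp add: scale_first_def)
  have lr_mono: "a \<le> b \<Longrightarrow> (1/k) ^ m * exp (a / 2) \<le> (1/k) ^ m * exp (b / 2)" for a b
    using k by (intro mult_left_mono) auto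
  show ?thesis
    unfolding gauss_diag_scale_first[OF pos k m(2)]
  proof (rule neyman_pearson_lower_bound[where l = "(1/k) ^ m * exp (c / 2)"])
    show "prob_space (density (gauss_diag n s) (scale_first_lr m k s))"
      using prob_space_gauss_diag[OF pos'] by (simp add: gauss_diag_scale_first[OF pos k m(2)])
    show "scale_first_lr m k s \<in> borel_measurable (gauss_diag n s)"
      unfolding scale_first_lr_def[abs_def] by measurable
    show "\<And>x. 0 \<le> scale_first_lr m k s x"
      using k by (simp add: scale_first_lr_def)
    fix x assume "x \<in> space (gauss_diag n s)"
    with separated lr_mono show "(x \<in> S \<and> scale_first_lr m k s x \<le> (1/k) ^ m * exp (c / 2))
        \<or> (x \<notin> S \<and> (1/k) ^ m * exp (c / 2) \<le> scale_first_lr m k s x)"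
      unfolding scale_first_lr_def by blast
  qed (use prob_space_gauss_diag[OF pos] S h_bounded in auto)
qed

lemma scale_first_lower_bound_ge_1:
  assumes "1 \<le> k" and p: "0 < (\<integral>x. h x \<partial>gauss_diag n s)" "(\<integral>x. h x \<partial>gauss_diag n s) < 1"
  shows "chi2_cdf m (chi2_cdf_inv m (\<integral>x. h x \<partial>gauss_diag n s) / k\<^sup>2)
    \<le> (\<integral>x. h x \<partial>gauss_diag n (scale_first m k s))"
proof -
  define t where "t = chi2_cdf_inv m (\<integral>x. h x \<partial>gauss_diag n s)"
  define S where "S = {x \<in> space (gauss_diag n s). chi2_statistic m s x \<le> t}"
  have a: "0 \<le> 1 - 1/k\<^sup>2" using \<open>1 \<le> k\<close> by (simp add: field_simps)
  have "measure (gauss_diag n (scale_first m k s)) S \<le> (\<integral>x. h x \<partial>gauss_diag n (scale_first m k s))"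
  proof (rule scale_first_expectation_ge[where c = "(1 - 1/k\<^sup>2) * t"])
    show "S \<in> sets (gauss_diag n s)" unfolding S_def by measurable
    show "measure (gauss_diag n s) S = (\<integral>x. h x \<partial>gauss_diag n s)"
      using chi2_cdf_chi2_cdf_inv[OF m(1) p] measure_chi2_statistic_le[OF pos m, of t]
      by (simp add: S_def t_def)
    fix x assume "x \<in> space (gauss_diag n s)"
    then show "(x \<in> S \<and> (1 - 1/k\<^sup>2) * chi2_statistic m s x \<le> (1 - 1/k\<^sup>2) * t)
        \<or> (x \<notin> S \<and> (1 - 1/k\<^sup>2) * t \<le> (1 - 1/k\<^sup>2) * chi2_statistic m s x)"
      using a by (cases "chi2_statistic m s x \<le> t") (auto simp: S_def intro: mult_left_mono)
  qed
  then show ?thesis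
    by (simp add: S_def t_def measure_scale_first_chi2_statistic_le[OF pos k m])
qed

lemma scale_first_lower_bound_lt_1:
  assumes "k < 1" and p: "0 < (\<integral>x. h x \<partial>gauss_diag n s)" "(\<integral>x. h x \<partial>gauss_diag n s) < 1"
  shows "1 - chi2_cdf m (chi2_cdf_inv m (1 - (\<integral>x. h x \<partial>gauss_diag n s)) / k\<^sup>2)
    \<le> (\<integral>x. h x \<partial>gauss_diag n (scale_first m k s))"
proof -
  define t where "t = chi2_cdf_inv m (1 - (\<integral>x. h x \<partial>gauss_diag n s))"
  define T where "T = {x \<in> space (gauss_diag n s). chi2_statistic m s x \<le> t}"
  define S where "S = space (gauss_diag n s) - T"
  have pos': "\<forall>i<n. 0 < scale_first m k s i" using pos k by (simp add: scale_first_def)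
  interpret P0: prob_space "gauss_diag n s" using prob_space_gauss_diag[OF pos] .
  interpret P1: prob_space "gauss_diag n (scale_first m k s)" using prob_space_gauss_diag[OF pos'] .
  have T: "T \<in> sets (gauss_diag n s)" unfolding T_def by measurable
  have sets_eq: "sets (gauss_diag n (scale_first m k s)) = sets (gauss_diag n s)"
    and space_eq: "space (gauss_diag n (scale_first m k s)) = space (gauss_diag n s)"
    by (simp_all add: sets_gauss_diag space_gauss_diag)
  have "k\<^sup>2 < 1" using k \<open>k < 1\<close> by (simp add: power_less_one_iff)
  then have a: "1 - 1/k\<^sup>2 < 0" using k by (simp add: field_simps)
  have "measure (gauss_diag n (scale_first m k s)) S \<le> (\<integral>x. h x \<partial>gauss_diag n (scale_first m k s))"
  proof (rule scale_first_expectation_ge[where c = "(1 - 1/k\<^sup>2) * t"])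
    show "S \<in> sets (gauss_diag n s)" unfolding S_def using T by auto
    have "measure (gauss_diag n s) T = 1 - (\<integral>x. h x \<partial>gauss_diag n s)"
      using chi2_cdf_chi2_cdf_inv[OF m(1), of "1 - (\<integral>x. h x \<partial>gauss_diag n s)"] p
        measure_chi2_statistic_le[OF pos m, of t]
      by (simp add: T_def t_def)
    then show "measure (gauss_diag n s) S = (\<integral>x. h x \<partial>gauss_diag n s)"
      using P0.prob_compl[OF T] by (simp add: S_def)
    fix x assume "x \<in> space (gauss_diag n s)"
    then show "(x \<in> S \<and> (1 - 1/k\<^sup>2) * chi2_statistic m s x \<le> (1 - 1/k\<^sup>2) * t)
        \<or> (x \<notin> S \<and> (1 - 1/k\<^sup>2) * t \<le> (1 - 1/k\<^sup>2) * chi2_statistic m s x)"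
      using a by (cases "chi2_statistic m s x \<le> t")
        (auto simp: S_def T_def intro: mult_left_mono_neg)
  qed
  moreover have "measure (gauss_diag n (scale_first m k s)) S = 1 - chi2_cdf m (t / k\<^sup>2)"
    using P1.prob_compl[of T] T measure_scale_first_chi2_statistic_le[OF pos k m, of t]
    by (simp add: S_def T_def space_eq sets_eq)
  ultimately show ?thesis by (simp add: t_def)
qed

end

theorem lemmaB1:
  fixes n m :: nat and s :: "nat \<Rightarrow> real" and k :: real
    and h :: "(nat \<Rightarrow> real) \<Rightarrow> real"
  assumes "1 \<le> n" and "1 \<le> m" and "m \<le> n"
    and "\<forall>i<n. 0 < s i" and "0 < k"
    and "h \<in> borel_measurable (gauss_diag n s)"
    and "\<forall>x. 0 \<le> h x \<and> h x \<le> 1"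
    and "0 < (\<integral>x. h x \<partial>gauss_diag n s)" and "(\<integral>x. h x \<partial>gauss_diag n s) < 1"
  shows "(\<integral>x. h x \<partial>gauss_diag n (\<lambda>i. if i < m then k * s i else s i)) \<ge>
    (if 1 \<le> k
     then chi2_cdf m (chi2_cdf_inv m (\<integral>x. h x \<partial>gauss_diag n s) / k\<^sup>2)
     else 1 - chi2_cdf m (chi2_cdf_inv m (1 - (\<integral>x. h x \<partial>gauss_diag n s)) / k\<^sup>2))"
  using scale_first_lower_bound_ge_1[OF assms(4,5,2,3,6,7) _ assms(8,9)]
    scale_first_lower_bound_lt_1[OF assms(4,5,2,3,6,7) _ assms(8,9)]
  by (simp add: scale_first_def)

end
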